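(* Let $a>1$ be an integer. Then $$\lim_{n\to\infty}\frac{\#\{k\le n : \mathrm{LB}_3(a^k)=(1,0,0)\}}{n}=\log_\phi(1+\phi^{-2}),\qquad \lim_{n\to\infty}\frac{\#\{k\le n : \mathrm{LB}_3(a^k)=(1,0,1)\}}{n}=\log_\phi\frac{\phi}{1+\phi^{-2}};$$ in particular both limits exist.
   Context: Let $F$ be the shifted Fibonacci sequence: $F_1=1$, $F_2=2$, $F_{n+2}=F_{n+1}+F_n$. By Zeckendorf's theorem every positive integer $m$ has a unique expansion $m=\sum_{k=1}^M \epsilon(k)F_{M-k+1}$ with $\epsilon(k)\in\{0,1\}$, $\epsilon(1)=1$ and $\epsilon(k)\epsilon(k+1)=0$ for all $k\le M-1$. For $s\in\mathbb{N}$ with $M\ge s$, $\mathrm{LB}_s(m):=(\epsilon(1),\dots,\epsilon(s))$ (the leading block of length $s$); it is undefined if $M<s$. $\phi=(1+\sqrt5)/2$ is the golden ratio. *)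

theory Defs
  imports Complex_Main
begin

text \<open>Shifted Fibonacci sequence: F 1 = 1, F 2 = 2, F (n+2) = F (n+1) + F n (F 0 is a dummy value).\<close>
fun F :: "nat \<Rightarrow> nat" where
  "F 0 = 1"
| "F (Suc 0) = 1"
| "F (Suc (Suc 0)) = 2"
| "F (Suc (Suc (Suc n))) = F (Suc (Suc n)) + F (Suc n)"

text \<open>A digit list eps = [eps(1), ..., eps(M)] (list index i corresponds to eps(i+1)).\<close>
definition zeck_val :: "bool list \<Rightarrow> nat" where
  "zeck_val eps = (\<Sum>i<length eps. if eps ! i then F (length eps - i) else 0)"

definition zeck_valid :: "bool list \<Rightarrow> bool" where
  "zeck_valid eps \<longleftrightarrow> eps \<noteq> [] \<and> hd eps \<and>
     (\<forall>i. Suc i < length eps \<longrightarrow> \<not> (eps ! i \<and> eps ! Suc i))"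

text \<open>The Zeckendorf expansion of m (unique by Zeckendorf's theorem, for m > 0).\<close>
definition zeck :: "nat \<Rightarrow> bool list" where
  "zeck m = (THE eps. zeck_valid eps \<and> zeck_val eps = m)"

definition LB :: "nat \<Rightarrow> nat \<Rightarrow> bool list option" where
  "LB s m = (if s \<le> length (zeck m) then Some (take s (zeck m)) else None)"

definition phi :: real where
  "phi = (1 + sqrt 5) / 2"

end

theory Submission
  imports Defs "HOL-Number_Theory.Fib" "HOL-Analysis.Kronecker_Approximation_Theorem"
begin

text \<open>
  If \<open>F (n + 2) \<le> m < F (n + 3)\<close>, the Zeckendorf expansion of \<open>m\<close> starts with 100 or 101
  according as \<open>m < F (n + 2) + F n\<close> or not. By Binet's formula
  \<open>log\<^sub>\<phi> (\<surd>5 F (n + 2)) = n + 3 + o(1)\<close> and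
  \<open>log\<^sub>\<phi> (\<surd>5 (F (n + 2) + F n)) = n + 3 + \<beta> + o(1)\<close> with \<open>\<beta> = log\<^sub>\<phi> (1 + \<phi>\<^sup>-\<^sup>2)\<close>,
  so for large \<open>m\<close> the block is 100 essentially iff the fractional part of \<open>log\<^sub>\<phi> (\<surd>5 m)\<close>
  lies in \<open>[0, \<beta>)\<close>. For \<open>m = a\<^sup>k\<close> this fractional part is that of \<open>k \<theta> + log\<^sub>\<phi> \<surd>5\<close>
  with \<open>\<theta> = log\<^sub>\<phi> a\<close>, which is irrational: \<open>\<phi>\<^sup>p = a\<^sup>q\<close> would make \<open>(1 - \<phi>)\<^sup>p\<close> a
  nonzero integer of modulus less than 1. So \<open>k \<theta> mod 1\<close> is equidistributed (proved here from
  Kronecker's approximation theorem), the block 100 has density \<open>\<beta>\<close>, and 101, the only other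
  block, has density \<open>1 - \<beta>\<close>.
\<close>

section \<open>Natural density\<close>

definition count_upto :: "(nat \<Rightarrow> bool) \<Rightarrow> nat \<Rightarrow> nat" where
  "count_upto P n = card {k \<in> {1..n}. P k}"

definition has_density :: "(nat \<Rightarrow> bool) \<Rightarrow> real \<Rightarrow> bool" where
  "has_density P \<delta> \<longleftrightarrow> (\<lambda>n. real (count_upto P n) / real n) \<longlonglongrightarrow> \<delta>"

lemma count_upto_le: "count_upto P n \<le> n"
proof -
  have "card {k \<in> {1..n}. P k} \<le> card {1..n}"
    by (intro card_mono) auto
  then show ?thesis
    by (simp add: count_upto_def)
qed

lemma count_upto_mono: "(\<And>k. P k \<Longrightarrow> Q k) \<Longrightarrow> count_upto P n \<le> count_upto Q n"
  unfolding count_upto_def by (intro card_mono) auto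

lemma count_upto_True: "count_upto (\<lambda>k. True) n = n"
proof -
  have "{k \<in> {1..n}. True} = {1..n}"
    by blast
  then show ?thesis
    by (simp add: count_upto_def)
qed

lemma count_upto_disj:
  assumes "\<And>k. \<not> (P k \<and> Q k)"
  shows "count_upto (\<lambda>k. P k \<or> Q k) n = count_upto P n + count_upto Q n"
proof -
  have "{k \<in> {1..n}. P k \<or> Q k} = {k \<in> {1..n}. P k} \<union> {k \<in> {1..n}. Q k}"
    by auto
  then show ?thesis
    unfolding count_upto_def using assms by (subst card_Un_disjoint[symmetric]) auto
qed

lemma count_upto_Not: "count_upto (\<lambda>k. \<not> P k) n = n - count_upto P n"
  using count_upto_disj[of P "\<lambda>k. \<not> P k" n] count_upto_True[of n] by simp

lemma count_upto_eventually_imp: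
  assumes "\<forall>\<^sub>F k in sequentially. P k \<longrightarrow> Q k"
  obtains K where "\<And>n. count_upto P n \<le> count_upto Q n + K"
proof -
  obtain K where K: "\<And>k. K \<le> k \<Longrightarrow> P k \<longrightarrow> Q k"
    using assms unfolding eventually_sequentially by blast
  have "count_upto P n \<le> count_upto Q n + K" for n
  proof -
    have "{k \<in> {1..n}. P k} \<subseteq> {k \<in> {1..n}. Q k} \<union> {..<K}"
      using K by (auto simp: not_le[symmetric])
    then have "count_upto P n \<le> card ({k \<in> {1..n}. Q k} \<union> {..<K})"
      unfolding count_upto_def by (intro card_mono) auto
    also have "\<dots> \<le> count_upto Q n + K"
      unfolding count_upto_def using card_Un_le[of _ "{..<K}"] by simp
    finally show ?thesis .
  qed
  then show thesis
    using that by blast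
qed

lemma count_upto_shift:
  "count_upto P n \<le> count_upto (\<lambda>k. P (k + q)) n + q"
  "count_upto (\<lambda>k. P (k + q)) n \<le> count_upto P n + q"
proof -
  have "(\<lambda>k. k + q) ` {k \<in> {1..n}. P (k + q)} = {j \<in> {q + 1..n + q}. P j}"
  proof (intro equalityI subsetI)
    fix j assume "j \<in> {j \<in> {q + 1..n + q}. P j}"
    then show "j \<in> (\<lambda>k. k + q) ` {k \<in> {1..n}. P (k + q)}"
      by (intro image_eqI[of _ _ "j - q"]) auto
  qed auto
  then have eq: "card {j \<in> {q + 1..n + q}. P j} = count_upto (\<lambda>k. P (k + q)) n"
    unfolding count_upto_def by (metis (no_types, lifting) card_image inj_on_def add_right_cancel)
  have "{k \<in> {1..n}. P k} \<subseteq> {j \<in> {q + 1..n + q}. P j} \<union> {1..q}"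
    by auto
  then have "count_upto P n \<le> card ({j \<in> {q + 1..n + q}. P j} \<union> {1..q})"
    unfolding count_upto_def by (intro card_mono) auto
  also have "\<dots> \<le> count_upto (\<lambda>k. P (k + q)) n + q"
    using card_Un_le[of "{j \<in> {q + 1..n + q}. P j}" "{1..q}"] eq by simp
  finally show "count_upto P n \<le> count_upto (\<lambda>k. P (k + q)) n + q" .
  have "{j \<in> {q + 1..n + q}. P j} \<subseteq> {k \<in> {1..n}. P k} \<union> {n + 1..n + q}"
    by auto
  then have "card {j \<in> {q + 1..n + q}. P j} \<le> card ({k \<in> {1..n}. P k} \<union> {n + 1..n + q})"
    by (intro card_mono) auto
  also have "\<dots> \<le> count_upto P n + q"
    unfolding count_upto_def using card_Un_le[of _ "{n + 1..n + q}"] by simp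
  finally show "count_upto (\<lambda>k. P (k + q)) n \<le> count_upto P n + q"
    using eq by simp
qed

lemma LIMSEQ_by_approximate_bounds:
  fixes x :: "nat \<Rightarrow> real"
  assumes "\<And>\<epsilon>. 0 < \<epsilon> \<Longrightarrow> \<exists>lo hi a b. lo \<longlonglongrightarrow> a \<and> hi \<longlonglongrightarrow> b \<and> l - \<epsilon> \<le> a \<and> b \<le> l + \<epsilon> \<and>
      (\<forall>\<^sub>F n in sequentially. lo n \<le> x n \<and> x n \<le> hi n)"
  shows "x \<longlonglongrightarrow> l"
proof (rule order_tendstoI)
  fix c assume "c < l"
  with assms[of "(l - c) / 2"] obtain lo hi a b where lo: "lo \<longlonglongrightarrow> a" "l - (l - c) / 2 \<le> a"
    and bounds: "\<forall>\<^sub>F n in sequentially. lo n \<le> x n \<and> x n \<le> hi n"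
    by auto
  from \<open>c < l\<close> lo have "\<forall>\<^sub>F n in sequentially. c < lo n"
    by (intro order_tendstoD(1)[OF lo(1)]) (simp add: field_simps)
  with bounds show "\<forall>\<^sub>F n in sequentially. c < x n"
    by eventually_elim auto
next
  fix c assume "l < c"
  with assms[of "(c - l) / 2"] obtain lo hi a b where hi: "hi \<longlonglongrightarrow> b" "b \<le> l + (c - l) / 2"
    and bounds: "\<forall>\<^sub>F n in sequentially. lo n \<le> x n \<and> x n \<le> hi n"
    by auto
  from \<open>l < c\<close> hi have "\<forall>\<^sub>F n in sequentially. hi n < c"
    by (intro order_tendstoD(2)[OF hi(1)]) (simp add: field_simps)
  with bounds show "\<forall>\<^sub>F n in sequentially. x n < c"
    by eventually_elim auto
qed

lemma has_density_squeeze: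
  assumes "\<And>\<epsilon>. 0 < \<epsilon> \<Longrightarrow> \<exists>Q R \<delta>\<^sub>1 \<delta>\<^sub>2. has_density Q \<delta>\<^sub>1 \<and> has_density R \<delta>\<^sub>2 \<and> \<delta> - \<epsilon> \<le> \<delta>\<^sub>1 \<and> \<delta>\<^sub>2 \<le> \<delta> + \<epsilon> \<and>
      (\<forall>\<^sub>F k in sequentially. (Q k \<longrightarrow> P k) \<and> (P k \<longrightarrow> R k))"
  shows "has_density P \<delta>"
  unfolding has_density_def
proof (rule LIMSEQ_by_approximate_bounds)
  fix \<epsilon> :: real assume "0 < \<epsilon>"
  then obtain Q R \<delta>\<^sub>1 \<delta>\<^sub>2 where QR: "has_density Q \<delta>\<^sub>1" "has_density R \<delta>\<^sub>2" "\<delta> - \<epsilon> \<le> \<delta>\<^sub>1" "\<delta>\<^sub>2 \<le> \<delta> + \<epsilon>"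
    and ev: "\<forall>\<^sub>F k in sequentially. (Q k \<longrightarrow> P k) \<and> (P k \<longrightarrow> R k)"
    using assms by blast
  have "\<forall>\<^sub>F k in sequentially. Q k \<longrightarrow> P k" "\<forall>\<^sub>F k in sequentially. P k \<longrightarrow> R k"
    using ev by (auto elim: eventually_mono)
  then obtain K1 K2 where K1: "\<And>n. count_upto Q n \<le> count_upto P n + K1"
    and K2: "\<And>n. count_upto P n \<le> count_upto R n + K2"
    by (metis count_upto_eventually_imp)
  define lo where "lo n = real (count_upto Q n) / real n - real K1 / real n" for n
  define hi where "hi n = real (count_upto R n) / real n + real K2 / real n" for n
  have "lo \<longlonglongrightarrow> \<delta>\<^sub>1 - 0"
    unfolding lo_def[abs_def] using QR(1) lim_const_over_n
    unfolding has_density_def by (rule tendsto_diff)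
  moreover have "hi \<longlonglongrightarrow> \<delta>\<^sub>2 + 0"
    unfolding hi_def[abs_def] using QR(2) lim_const_over_n
    unfolding has_density_def by (rule tendsto_add)
  moreover have "lo n \<le> real (count_upto P n) / real n \<and> real (count_upto P n) / real n \<le> hi n" for n
    using K1[of n] K2[of n] unfolding lo_def hi_def
    by (simp add: diff_divide_distrib[symmetric] add_divide_distrib[symmetric] divide_right_mono)
  ultimately show "\<exists>lo hi a b. lo \<longlonglongrightarrow> a \<and> hi \<longlonglongrightarrow> b \<and> \<delta> - \<epsilon> \<le> a \<and> b \<le> \<delta> + \<epsilon> \<and>
      (\<forall>\<^sub>F n in sequentially. lo n \<le> real (count_upto P n) / real n \<and> real (count_upto P n) / real n \<le> hi n)"
    using QR(3,4) by (intro exI[of _ lo] exI[of _ hi] exI[of _ \<delta>\<^sub>1] exI[of _ \<delta>\<^sub>2]) auto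
qed

lemma has_density_Not:
  assumes "has_density P \<delta>"
  shows "has_density (\<lambda>k. \<not> P k) (1 - \<delta>)"
  unfolding has_density_def
proof (rule Lim_transform_eventually)
  show "(\<lambda>n. 1 - real (count_upto P n) / real n) \<longlonglongrightarrow> 1 - \<delta>"
    using assms unfolding has_density_def by (intro tendsto_intros)
  show "\<forall>\<^sub>F n in sequentially. 1 - real (count_upto P n) / real n = real (count_upto (\<lambda>k. \<not> P k) n) / real n"
    using eventually_gt_at_top[of 0]
    by eventually_elim (simp add: count_upto_Not count_upto_le of_nat_diff field_simps)
qed

section \<open>Equidistribution of \<open>k \<theta> mod 1\<close>\<close>

definition orbit_count :: "real \<Rightarrow> nat \<Rightarrow> real \<Rightarrow> real \<Rightarrow> nat" where
  "orbit_count \<theta> n w L = count_upto (\<lambda>k. frac (real k * \<theta> - w) < L) n"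

lemma frac_eq_if: "-1 \<le> y \<Longrightarrow> y < 1 \<Longrightarrow> frac y = (if 0 \<le> y then y else y + 1)"
  by (simp add: frac_unique_iff)

lemma frac_less_add_iff:
  assumes "0 \<le> L\<^sub>1" "0 \<le> L\<^sub>2" "L\<^sub>1 + L\<^sub>2 \<le> 1"
  shows "frac t < L\<^sub>1 + L\<^sub>2 \<longleftrightarrow> frac t < L\<^sub>1 \<or> frac (t - L\<^sub>1) < L\<^sub>2"
    and "\<not> (frac t < L\<^sub>1 \<and> frac (t - L\<^sub>1) < L\<^sub>2)"
proof -
  have "frac (t - L\<^sub>1) = frac ((frac t - L\<^sub>1) + of_int \<lfloor>t\<rfloor>)"
    by (simp add: frac_def)
  also have "\<dots> = (if 0 \<le> frac t - L\<^sub>1 then frac t - L\<^sub>1 else frac t - L\<^sub>1 + 1)"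
  proof (subst frac_add_of_int_right, intro frac_eq_if)
    show "-1 \<le> frac t - L\<^sub>1" "frac t - L\<^sub>1 < 1"
      using assms frac_lt_1[of t] frac_ge_0[of t] by linarith+
  qed
  finally show "frac t < L\<^sub>1 + L\<^sub>2 \<longleftrightarrow> frac t < L\<^sub>1 \<or> frac (t - L\<^sub>1) < L\<^sub>2"
    and "\<not> (frac t < L\<^sub>1 \<and> frac (t - L\<^sub>1) < L\<^sub>2)"
    using assms frac_lt_1[of t] frac_ge_0[of t] by (auto simp del: frac_ge_0)
qed

lemma orbit_count_add:
  assumes "0 \<le> L\<^sub>1" "0 \<le> L\<^sub>2" "L\<^sub>1 + L\<^sub>2 \<le> 1"
  shows "orbit_count \<theta> n w (L\<^sub>1 + L\<^sub>2) = orbit_count \<theta> n w L\<^sub>1 + orbit_count \<theta> n (w + L\<^sub>1) L\<^sub>2"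
proof -
  have "orbit_count \<theta> n w (L\<^sub>1 + L\<^sub>2)
      = count_upto (\<lambda>k. frac (real k * \<theta> - w) < L\<^sub>1 \<or> frac (real k * \<theta> - w - L\<^sub>1) < L\<^sub>2) n"
    unfolding orbit_count_def using frac_less_add_iff(1)[OF assms] by simp
  also have "\<dots> = count_upto (\<lambda>k. frac (real k * \<theta> - w) < L\<^sub>1) n
      + count_upto (\<lambda>k. frac (real k * \<theta> - w - L\<^sub>1) < L\<^sub>2) n"
    using frac_less_add_iff(2)[OF assms] by (intro count_upto_disj) blast
  finally show ?thesis
    unfolding orbit_count_def by (simp add: diff_diff_eq)
qed

lemma orbit_count_sum:
  assumes "0 \<le> d" "real j * d \<le> 1"
  shows "orbit_count \<theta> n w (real j * d) = (\<Sum>i<j. orbit_count \<theta> n (w + real i * d) d)"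
  using assms(2)
proof (induction j)
  case 0
  then show ?case
    by (simp add: orbit_count_def count_upto_def not_less)
next
  case (Suc j)
  have "real j * d \<le> 1"
    using Suc.prems assms(1) by (simp add: algebra_simps)
  then have "orbit_count \<theta> n w (real j * d + d)
      = orbit_count \<theta> n w (real j * d) + orbit_count \<theta> n (w + real j * d) d"
    using Suc.prems assms(1) by (intro orbit_count_add) (simp_all add: algebra_simps)
  then show ?case
    using Suc.IH \<open>real j * d \<le> 1\<close> by (simp add: algebra_simps)
qed

lemma orbit_count_shift:
  "\<bar>real (orbit_count \<theta> n (w + frac (real q * \<theta>)) L) - real (orbit_count \<theta> n w L)\<bar> \<le> real q"
proof -
  define P where "P k \<longleftrightarrow> frac (real k * \<theta> - (w + frac (real q * \<theta>))) < L" for k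
  have "real (k + q) * \<theta> - (w + frac (real q * \<theta>)) = (real k * \<theta> - w) + of_int \<lfloor>real q * \<theta>\<rfloor>" for k
    by (simp add: frac_def algebra_simps)
  then have "orbit_count \<theta> n w L = count_upto (\<lambda>k. P (k + q)) n"
    unfolding orbit_count_def P_def by (simp only: frac_add_of_int_right)
  moreover have "orbit_count \<theta> n (w + frac (real q * \<theta>)) L = count_upto P n"
    unfolding orbit_count_def P_def ..
  ultimately show ?thesis
    using count_upto_shift[where P = P and n = n and q = q] by linarith
qed

lemma orbit_count_shift_mult:
  "\<bar>real (orbit_count \<theta> n (w + real j * frac (real q * \<theta>)) L) - real (orbit_count \<theta> n w L)\<bar>
     \<le> real j * real q"
proof (induction j)
  case (Suc j)
  have "w + real (Suc j) * frac (real q * \<theta>) = (w + real j * frac (real q * \<theta>)) + frac (real q * \<theta>)"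
    by (simp add: algebra_simps)
  then show ?case
    using Suc orbit_count_shift[of \<theta> n "w + real j * frac (real q * \<theta>)" q L]
    by (simp add: algebra_simps)
qed simp

lemma orbit_count_mono: "L \<le> L' \<Longrightarrow> orbit_count \<theta> n w L \<le> orbit_count \<theta> n w L'"
  unfolding orbit_count_def by (rule count_upto_mono) simp

lemma orbit_count_one: "orbit_count \<theta> n w 1 = n"
  unfolding orbit_count_def by (simp add: frac_lt_1 count_upto_True)

lemma orbit_count_tiles:
  fixes q N j n :: nat and \<theta> w :: real
  defines "d \<equiv> frac (real q * \<theta>)"
  defines "c \<equiv> real (orbit_count \<theta> n w d)"
  assumes "j \<le> N" "real j * d \<le> 1"
  shows "real j * (c - real N * real q) \<le> real (orbit_count \<theta> n w (real j * d))"
    and "real (orbit_count \<theta> n w (real j * d)) \<le> real j * (c + real N * real q)"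
proof -
  have close: "\<bar>real (orbit_count \<theta> n (w + real i * d) d) - c\<bar> \<le> real N * real q"
    if "i \<in> {..<j}" for i
  proof -
    have "real i * real q \<le> real N * real q"
      using that assms(3) by (intro mult_right_mono) simp_all
    then show ?thesis
      using orbit_count_shift_mult[of \<theta> n w i q d] unfolding c_def d_def by linarith
  qed
  have sum: "real (orbit_count \<theta> n w (real j * d)) = (\<Sum>i<j. real (orbit_count \<theta> n (w + real i * d) d))"
    using orbit_count_sum[of d j \<theta> n w] assms(4) by (simp add: d_def)
  have "real j * (c - real N * real q) = (\<Sum>i<j. c - real N * real q)"
    by simp
  also have "\<dots> \<le> real (orbit_count \<theta> n w (real j * d))"
    unfolding sum by (intro sum_mono) (use close in fastforce)
  finally show "real j * (c - real N * real q) \<le> real (orbit_count \<theta> n w (real j * d))" .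
  have "real (orbit_count \<theta> n w (real j * d)) \<le> (\<Sum>i<j. c + real N * real q)"
    unfolding sum by (intro sum_mono) (use close in fastforce)
  also have "\<dots> = real j * (c + real N * real q)"
    by simp
  finally show "real (orbit_count \<theta> n w (real j * d)) \<le> real j * (c + real N * real q)" .
qed

lemma orbit_count_interval_bounds:
  fixes q N j n :: nat and \<theta> w L :: real
  defines "d \<equiv> frac (real q * \<theta>)"
  defines "c \<equiv> real (orbit_count \<theta> n w d)"
  assumes "j \<le> N" "real j * d \<le> L" "L \<le> (real j + 1) * d" "L \<le> 1"
  shows "real j * (c - real N * real q) \<le> real (orbit_count \<theta> n w L)"
    and "real (orbit_count \<theta> n w L) \<le> (real j + 1) * (c + real N * real q)"
proof -
  note tiles = orbit_count_tiles[where q = q and N = N and j = j and n = n and \<theta> = \<theta> and w = w,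
      folded d_def, folded c_def, OF assms(3)]
  have "real j * d \<le> 1"
    using assms(4,6) by linarith
  then show "real j * (c - real N * real q) \<le> real (orbit_count \<theta> n w L)"
    using tiles(1) orbit_count_mono[OF assms(4), of \<theta> n w] by linarith
  have "orbit_count \<theta> n w L = orbit_count \<theta> n w (real j * d) + orbit_count \<theta> n (w + real j * d) (L - real j * d)"
    using orbit_count_add[of "real j * d" "L - real j * d"] assms(4,6) by (simp add: d_def)
  moreover have "real (orbit_count \<theta> n (w + real j * d) (L - real j * d))
      \<le> real (orbit_count \<theta> n (w + real j * d) d)"
    using assms(5) by (simp add: orbit_count_mono algebra_simps)
  moreover have "real (orbit_count \<theta> n (w + real j * d) d) \<le> c + real j * real q"
    using orbit_count_shift_mult[of \<theta> n w j q d] unfolding c_def d_def by linarith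
  moreover have "real j * real q \<le> real N * real q"
    using assms(3) by (simp add: mult_right_mono)
  ultimately show "real (orbit_count \<theta> n w L) \<le> (real j + 1) * (c + real N * real q)"
    using tiles(2) \<open>real j * d \<le> 1\<close> by (simp add: algebra_simps)
qed

text \<open>
  Tile \<open>[0, 1)\<close> and \<open>[0, L)\<close> by translates of \<open>[0, d)\<close> with \<open>d = frac (q \<theta>)\<close>. As
  \<open>j d \<equiv> j q \<theta> (mod 1)\<close>, the translate by \<open>j d\<close> is hit by \<open>k + j q\<close> iff \<open>[0, d)\<close> is hit
  by \<open>k\<close>, so all tiles have nearly equal counts, each about \<open>n / N\<close>.
\<close>

lemma orbit_count_estimates:
  fixes q N K n :: nat and \<theta> w L :: real
  defines "d \<equiv> frac (real q * \<theta>)"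
  assumes "0 < d" "real N * d \<le> 1" "1 < (real N + 1) * d"
    and "real K * d \<le> L" "L < (real K + 1) * d" "L \<le> 1"
  shows "real K * (real n / (real N + 1) - 2 * real N * real q) \<le> real (orbit_count \<theta> n w L)"
    and "real (orbit_count \<theta> n w L) \<le> (real K + 1) * (real n / real N + 2 * real N * real q)"
proof -
  define c where "c = real (orbit_count \<theta> n w d)"
  define e where "e = real N * real q"
  have "real K * d < (real N + 1) * d"
    using assms(4-7) by linarith
  then have "K \<le> N"
    using assms(2) by (simp add: mult_less_cancel_right)
  have "N \<noteq> 0"
    using assms(4) frac_lt_1[of "real q * \<theta>"] by (intro notI) (simp add: d_def)
  note bounds = orbit_count_interval_bounds[where q = q and \<theta> = \<theta> and n = n and w = w and N = N,
      folded d_def, folded c_def e_def]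
  have "real N * (c - e) \<le> real n" "real n \<le> (real N + 1) * (c + e)"
    using bounds[of N 1] assms(3,4) by (simp_all add: orbit_count_one)
  then have c: "real n / (real N + 1) - e \<le> c" "c \<le> real n / real N + e"
    using \<open>N \<noteq> 0\<close> by (simp_all add: field_simps)
  have "real K * (real n / (real N + 1) - 2 * e) \<le> real K * (c - e)"
    using c by (intro mult_left_mono) auto
  also have "\<dots> \<le> real (orbit_count \<theta> n w L)"
    using bounds(1)[of K L] \<open>K \<le> N\<close> assms(5-7) by simp
  finally show "real K * (real n / (real N + 1) - 2 * real N * real q) \<le> real (orbit_count \<theta> n w L)"
    by (simp add: e_def mult.assoc)
  have "real (orbit_count \<theta> n w L) \<le> (real K + 1) * (c + e)"
    using bounds(2)[of K L] \<open>K \<le> N\<close> assms(5-7) by simp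
  also have "\<dots> \<le> (real K + 1) * (real n / real N + 2 * e)"
    using c by (intro mult_left_mono) auto
  finally show "real (orbit_count \<theta> n w L) \<le> (real K + 1) * (real n / real N + 2 * real N * real q)"
    by (simp add: e_def mult.assoc)
qed

lemma tiling_ratio_bounds:
  fixes d L :: real and K N :: nat
  assumes "0 < d" "d \<le> 1 / 2" "0 \<le> L" "L \<le> 1"
    and "real N * d \<le> 1" "1 < (real N + 1) * d" "real K * d \<le> L" "L < (real K + 1) * d"
  shows "L - 2 * d \<le> real K / (real N + 1)" and "(real K + 1) / real N \<le> L + 4 * d"
proof -
  have "(L - 2 * d) * (real N + 1) \<le> real K"
  proof (cases "L - 2 * d \<le> 0")
    case False
    have "(L - 2 * d) * ((real N + 1) * d) \<le> (L - 2 * d) * (1 + d)"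
      using False assms(5) by (intro mult_left_mono) (auto simp: algebra_simps)
    also have "\<dots> = L - d - d * (1 - L + 2 * d)"
      by (simp add: algebra_simps)
    also have "\<dots> \<le> real K * d"
      using assms(1,4,8) mult_nonneg_nonneg[of d "1 - L + 2 * d"] by (simp add: algebra_simps)
    finally show ?thesis
      using assms(1) by (simp add: mult.assoc[symmetric])
  qed (simp add: mult_nonpos_nonneg order.trans[of _ 0])
  then show "L - 2 * d \<le> real K / (real N + 1)"
    by (simp add: field_simps)
  have "N \<noteq> 0"
    using assms(2,6) by (intro notI) simp
  have "(L + 4 * d) * (1 - d) = L + d + d * (3 - L - 4 * d)"
    by (simp add: algebra_simps)
  then have "(real K + 1) * d \<le> (L + 4 * d) * (1 - d)"
    using assms(1,2,4,7) mult_nonneg_nonneg[of d "3 - L - 4 * d"] by (simp add: algebra_simps)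
  also have "\<dots> \<le> (L + 4 * d) * (real N * d)"
    using assms(1,3,6) by (intro mult_left_mono) (auto simp: algebra_simps)
  finally have "real K + 1 \<le> (L + 4 * d) * real N"
    using assms(1) by (simp add: mult.assoc[symmetric])
  then show "(real K + 1) / real N \<le> L + 4 * d"
    using \<open>N \<noteq> 0\<close> by (simp add: field_simps)
qed

theorem frac_mult_has_density:
  assumes "\<theta> \<notin> \<rat>" "0 \<le> L" "L \<le> 1"
  shows "has_density (\<lambda>k. frac (real k * \<theta> - w) < L) L"
  unfolding has_density_def orbit_count_def[symmetric]
proof (rule LIMSEQ_by_approximate_bounds)
  fix \<epsilon> :: real assume "0 < \<epsilon>"
  then obtain q where q: "0 < q" "\<bar>frac (real q * \<theta>) - 0\<bar> < min (\<epsilon> / 4) (1 / 2)"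
    using Kronecker_approx_1_explicit[OF assms(1), of 0 "min (\<epsilon> / 4) (1 / 2)"] by auto
  define d where "d = frac (real q * \<theta>)"
  have "real q * \<theta> \<notin> \<int>"
  proof
    assume "real q * \<theta> \<in> \<int>"
    then have "real q * \<theta> / real q \<in> \<rat>"
      using Ints_subset_Rats by (intro Rats_divide) auto
    then show False
      using assms(1) q(1) by simp
  qed
  then have d: "0 < d" "d \<le> \<epsilon> / 4" "d \<le> 1 / 2"
    using q(2) by (auto simp: d_def)
  define N where "N = nat \<lfloor>1 / d\<rfloor>"
  define K where "K = nat \<lfloor>L / d\<rfloor>"
  have "real N \<le> 1 / d" "1 / d < real N + 1" "real K \<le> L / d" "L / d < real K + 1"
    using d(1) assms(2) unfolding N_def K_def by (auto simp: of_nat_nat)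
  then have N: "real N * d \<le> 1" "1 < (real N + 1) * d"
    and K: "real K * d \<le> L" "L < (real K + 1) * d"
    using d(1) by (simp_all add: field_simps)
  have ratio: "L - 2 * d \<le> real K / (real N + 1)" "(real K + 1) / real N \<le> L + 4 * d"
    using tiling_ratio_bounds[OF d(1,3) assms(2,3) N K] by auto
  define lo where "lo n = real K / (real N + 1) - 2 * real K * real N * real q / real n" for n
  define hi where "hi n = (real K + 1) / real N + 2 * (real K + 1) * real N * real q / real n" for n
  have lim: "lo \<longlonglongrightarrow> real K / (real N + 1) - 0" "hi \<longlonglongrightarrow> (real K + 1) / real N + 0"
    unfolding lo_def[abs_def] hi_def[abs_def] by (intro tendsto_intros lim_const_over_n)+
  have bounds: "lo n \<le> real (orbit_count \<theta> n w L) / real n \<and> real (orbit_count \<theta> n w L) / real n \<le> hi n"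
    if "0 < n" for n
  proof -
    note est = orbit_count_estimates[of q \<theta> N K L n w, folded d_def, OF d(1) N K assms(3)]
    have "lo n = real K * (real n / (real N + 1) - 2 * real N * real q) / real n"
      "hi n = (real K + 1) * (real n / real N + 2 * real N * real q) / real n"
      using that by (simp_all add: lo_def hi_def field_simps)
    then show ?thesis
      using est by (simp add: divide_right_mono)
  qed
  have "\<forall>\<^sub>F n in sequentially. lo n \<le> real (orbit_count \<theta> n w L) / real n \<and>
        real (orbit_count \<theta> n w L) / real n \<le> hi n"
    using eventually_gt_at_top[of 0] by (rule eventually_mono) (rule bounds)
  moreover have "L - \<epsilon> \<le> real K / (real N + 1) - 0" "(real K + 1) / real N + 0 \<le> L + \<epsilon>"
    using ratio d by simp_all
  ultimately show "\<exists>lo hi a b. lo \<longlonglongrightarrow> a \<and> hi \<longlonglongrightarrow> b \<and> L - \<epsilon> \<le> a \<and> b \<le> L + \<epsilon> \<and>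
      (\<forall>\<^sub>F n in sequentially. lo n \<le> real (orbit_count \<theta> n w L) / real n \<and>
        real (orbit_count \<theta> n w L) / real n \<le> hi n)"
    using lim by blast
qed

section \<open>Zeckendorf expansions\<close>

text \<open>The dummy value \<open>F 0 = 1\<close> happens to fit: \<open>F\<close> is \<open>fib\<close> shifted by one everywhere.\<close>

lemma F_eq_fib: "F n = fib (Suc n)"
  by (induction n rule: F.induct) (simp_all add: numeral_2_eq_2)

lemma F_Suc_Suc: "F (Suc (Suc n)) = F (Suc n) + F n"
  by (simp add: F_eq_fib)

declare F.simps(4) [simp del]

lemma F_pos: "0 < F n"
  by (simp add: F_eq_fib fib_neq_0_nat)

lemma F_mono: "m \<le> n \<Longrightarrow> F m \<le> F n"
  by (simp add: F_eq_fib fib_mono)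

lemma F_3: "F 3 = 3"
  by (simp add: F_eq_fib numeral_3_eq_3 numeral_2_eq_2)

lemma less_F_Suc: "m < F (Suc m)"
proof (induction m)
  case (Suc m)
  then show ?case using F_pos[of m] by (simp add: F_Suc_Suc)
qed simp

fun nonadjacent :: "bool list \<Rightarrow> bool" where
  "nonadjacent (b # c # bs) \<longleftrightarrow> \<not> (b \<and> c) \<and> nonadjacent (c # bs)"
| "nonadjacent _ \<longleftrightarrow> True"

lemma nonadjacent_tl: "nonadjacent (b # bs) \<Longrightarrow> nonadjacent bs"
  by (cases bs) auto

lemma nonadjacent_iff_nth:
  "nonadjacent xs \<longleftrightarrow> (\<forall>i. Suc i < length xs \<longrightarrow> \<not> (xs ! i \<and> xs ! Suc i))"
proof (induction xs rule: nonadjacent.induct)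
  case (1 b c bs)
  then show ?case
    by (auto simp: nth_Cons split: nat.splits)
qed auto

lemma zeck_valid_iff: "zeck_valid xs \<longleftrightarrow> xs \<noteq> [] \<and> hd xs \<and> nonadjacent xs"
  by (simp add: zeck_valid_def nonadjacent_iff_nth)

lemma zeck_val_Nil [simp]: "zeck_val [] = 0"
  by (simp add: zeck_val_def)

lemma zeck_val_Cons [simp]:
  "zeck_val (b # bs) = (if b then F (Suc (length bs)) else 0) + zeck_val bs"
  unfolding zeck_val_def length_Cons sum.lessThan_Suc_shift
  by (auto simp del: sum.lessThan_Suc intro!: sum.cong)

lemma zeck_val_less_F: "nonadjacent xs \<Longrightarrow> zeck_val xs < F (Suc (length xs))"
proof (induction xs rule: induct_list012)
  case (3 b c bs)
  have "zeck_val bs < F (Suc (length bs))" and "zeck_val (c # bs) < F (Suc (Suc (length bs)))"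
    using 3 nonadjacent_tl by auto
  then show ?case
    using 3(3) F_mono[of "Suc (length bs)" "Suc (Suc (length bs))"] by (auto simp: F_Suc_Suc)
qed simp_all

lemma zeck_val_inj:
  assumes "nonadjacent xs" "nonadjacent ys" "length xs = length ys" "zeck_val xs = zeck_val ys"
  shows "xs = ys"
  using assms
proof (induction xs arbitrary: ys)
  case (Cons x xs)
  then obtain y ys' where ys: "ys = y # ys'" "length ys' = length xs"
    by (cases ys) auto
  have "nonadjacent xs" "nonadjacent ys'"
    using Cons.prems ys nonadjacent_tl by blast+
  then have "zeck_val xs < F (Suc (length xs))" "zeck_val ys' < F (Suc (length xs))"
    using zeck_val_less_F ys(2) by metis+
  then have "x = y"
    using Cons.prems(4) ys by (cases x; cases y) auto
  then show ?case
    using Cons ys \<open>nonadjacent xs\<close> \<open>nonadjacent ys'\<close> by auto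
qed simp

lemma nonadjacent_expansion_exists:
  "m < F (Suc L) \<Longrightarrow> \<exists>xs. length xs = L \<and> nonadjacent xs \<and> zeck_val xs = m"
proof (induction L arbitrary: m rule: less_induct)
  case (less L)
  show ?case
  proof (cases L)
    case 0
    then show ?thesis using less.prems by (intro exI[of _ "[]"]) simp
  next
    case (Suc L')
    show ?thesis
    proof (cases "m < F L")
      case True
      then obtain ys where "length ys = L'" "nonadjacent ys" "zeck_val ys = m"
        using less.IH[of L'] Suc by auto
      then show ?thesis
        using Suc by (intro exI[of _ "False # ys"]) (cases ys; simp)
    next
      case False
      show ?thesis
      proof (cases L')
        case 0
        then show ?thesis using False less.prems Suc by (intro exI[of _ "[True]"]) simp
      next
        case (Suc L'')
        then have "m - F L < F (Suc L'')"
          using less.prems False \<open>L = Suc L'\<close> by (simp add: F_Suc_Suc)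
        then obtain ys where "length ys = L''" "nonadjacent ys" "zeck_val ys = m - F L"
          using less.IH[of L''] \<open>L = Suc L'\<close> Suc by auto
        then show ?thesis
          using False Suc \<open>L = Suc L'\<close> by (intro exI[of _ "True # False # ys"]) (cases ys; simp)
      qed
    qed
  qed
qed

lemma zeck_valid_bounds:
  assumes "zeck_valid xs"
  shows "F (length xs) \<le> zeck_val xs" "zeck_val xs < F (Suc (length xs))"
proof -
  show "zeck_val xs < F (Suc (length xs))"
    using assms zeck_val_less_F by (simp add: zeck_valid_iff)
  obtain bs where "xs = True # bs"
    using assms by (cases xs) (auto simp: zeck_valid_iff)
  then show "F (length xs) \<le> zeck_val xs"
    by simp
qed

lemma zeck_eqI:
  assumes "zeck_valid xs" "zeck_val xs = m"
  shows "zeck m = xs"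
  unfolding zeck_def
proof (rule the_equality)
  fix ys assume ys: "zeck_valid ys \<and> zeck_val ys = m"
  have "\<not> Suc (length xs) \<le> length ys" "\<not> Suc (length ys) \<le> length xs"
    using zeck_valid_bounds[of xs] zeck_valid_bounds[of ys] F_mono assms ys
    by (metis leD order.trans)+
  then show "ys = xs"
    using zeck_val_inj assms ys by (simp add: zeck_valid_iff)
qed (use assms in simp)

lemma F_bracket:
  assumes "1 \<le> m"
  obtains M where "1 \<le> M" "F M \<le> m" "m < F (Suc M)"
proof -
  define M where "M = (LEAST M. m < F (Suc M))"
  have M: "m < F (Suc M)"
    unfolding M_def by (rule LeastI_ex) (use less_F_Suc in blast)
  have "M \<noteq> 0"
    using M assms by (intro notI) simp
  moreover have "\<not> m < F (Suc (M - 1))"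
    unfolding M_def by (rule not_less_Least) (use \<open>M \<noteq> 0\<close> M_def in simp)
  ultimately show thesis
    using M that[of M] by simp
qed

lemma zeck_of_bracket:
  assumes "1 \<le> M" "F M \<le> m" "m < F (Suc M)"
  shows "zeck_valid (zeck m)" "zeck_val (zeck m) = m" "length (zeck m) = M"
proof -
  obtain xs where xs: "length xs = M" "nonadjacent xs" "zeck_val xs = m"
    using nonadjacent_expansion_exists assms(3) by blast
  then obtain b bs where bs: "xs = b # bs"
    using assms(1) by (cases xs) auto
  have b
  proof (rule ccontr)
    assume "\<not> b"
    then have "m < F M"
      using zeck_val_less_F[of bs] xs bs nonadjacent_tl by auto
    then show False using assms(2) by simp
  qed
  then have "zeck_valid xs"
    using xs bs by (simp add: zeck_valid_iff)
  then show "zeck_valid (zeck m)" "zeck_val (zeck m) = m" "length (zeck m) = M"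
    using zeck_eqI xs by auto
qed

lemma LB3_of_bracket:
  assumes "1 \<le> n" "F (n + 2) \<le> m" "m < F (n + 3)"
  shows "LB 3 m = Some [True, False, F (n + 2) + F n \<le> m]"
proof -
  have z: "zeck_valid (zeck m)" "zeck_val (zeck m) = m" "length (zeck m) = n + 2"
    using zeck_of_bracket[of "n + 2" m] assms by (simp_all add: eval_nat_numeral)
  obtain b0 b1 c cs where "zeck m = b0 # b1 # c # cs"
    using z(3) assms(1) by (cases "zeck m" rule: remdups_adj.cases; cases "tl (tl (zeck m))") auto
  then have zc: "zeck m = True # False # c # cs" "nonadjacent (c # cs)"
    using z(1) by (auto simp: zeck_valid_iff)
  have len: "Suc (length cs) = n"
    using z(3) zc by simp
  have "c \<longleftrightarrow> F (n + 2) + F n \<le> m"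
    using z(2) zc len zeck_val_less_F[of cs] nonadjacent_tl by (cases c) auto
  then show ?thesis
    unfolding LB_def using zc by simp
qed

lemma LB3_cases:
  assumes "3 \<le> m"
  obtains n where "1 \<le> n" "F (n + 2) \<le> m" "m < F (n + 3)"
    "LB 3 m = Some [True, False, F (n + 2) + F n \<le> m]"
proof -
  obtain M where M: "1 \<le> M" "F M \<le> m" "m < F (Suc M)"
    using F_bracket assms by (metis le_trans one_le_numeral)
  have "3 \<le> M"
    using F_mono[of "Suc M" 3] M(3) assms F_3 by linarith
  then obtain n where "M = n + 2" "1 \<le> n"
    by (intro that[of "M - 2"]) auto
  then show thesis
    using that LB3_of_bracket M by (simp add: eval_nat_numeral)
qed

section \<open>The golden ratio\<close>

lemma phi_gt_1: "1 < phi"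
  unfolding phi_def by (simp add: real_less_rsqrt)

lemma phi_less_2: "phi < 2"
  unfolding phi_def using real_less_lsqrt[of 3 5] by simp

lemma golden_power_Suc_Suc:
  fixes x :: real
  assumes "x\<^sup>2 = x + 1"
  shows "x ^ Suc (Suc n) = x ^ Suc n + x ^ n"
proof -
  have "x ^ Suc (Suc n) = x ^ n * x\<^sup>2"
    by (simp add: power2_eq_square)
  then show ?thesis
    using assms by (simp add: algebra_simps)
qed

lemma phi_squared: "phi\<^sup>2 = phi + 1"
  unfolding phi_def by (simp add: power2_eq_square field_simps)

lemma phi_power_plus_conjugate_Ints: "phi ^ n + (1 - phi) ^ n \<in> \<int>"
proof (induction n rule: fib.induct)
  case (3 n)
  have "(1 - phi)\<^sup>2 = (1 - phi) + 1"
    using phi_squared by (simp add: power2_eq_square algebra_simps)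
  then have "phi ^ Suc (Suc n) + (1 - phi) ^ Suc (Suc n)
      = (phi ^ Suc n + (1 - phi) ^ Suc n) + (phi ^ n + (1 - phi) ^ n)"
    using golden_power_Suc_Suc phi_squared by simp
  then show ?case
    using 3 by simp
qed simp_all

lemma log_phi_irrational:
  assumes "1 < a"
  shows "log phi (real a) \<notin> \<rat>"
proof
  assume "log phi (real a) \<in> \<rat>"
  then obtain p q :: nat where q: "q \<noteq> 0" and pq: "\<bar>log phi (real a)\<bar> = real p / real q"
    by (rule Rats_abs_nat_div_natE)
  have pos: "0 < log phi (real a)"
    using assms phi_gt_1 by simp
  then have "p \<noteq> 0"
    using pq by (intro notI) simp
  have "real a ^ q = phi powr (log phi (real a) * real q)"
    using assms phi_gt_1 by (simp add: powr_powr[symmetric] powr_realpow)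
  also have "\<dots> = phi ^ p"
    using pq pos q phi_gt_1 by (simp add: powr_realpow)
  finally have "(1 - phi) ^ p = (phi ^ p + (1 - phi) ^ p) - of_nat (a ^ q)"
    by simp
  then have "(1 - phi) ^ p \<in> \<int>"
    using phi_power_plus_conjugate_Ints by (metis Ints_diff Ints_of_nat)
  moreover have "\<bar>1 - phi\<bar> < 1" "1 - phi \<noteq> 0"
    using phi_gt_1 phi_less_2 by auto
  then have "\<bar>(1 - phi) ^ p\<bar> < 1" "(1 - phi) ^ p \<noteq> 0"
    using \<open>p \<noteq> 0\<close> by (simp_all add: power_abs power_less_one_iff)
  ultimately show False
    using Ints_nonzero_abs_less1 by blast
qed

lemma phi_powr_minus_2: "phi powr -2 = 1 / phi\<^sup>2"
  using phi_gt_1 by (simp add: powr_minus divide_inverse)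

lemma log_phi_golden_mantissa_bounds:
  "0 < log phi (1 + phi powr -2)" "log phi (1 + phi powr -2) < 1"
proof -
  have "1 + 1 / phi\<^sup>2 < phi"
    using phi_gt_1 phi_squared by (simp add: field_simps power2_eq_square)
  then show "0 < log phi (1 + phi powr -2)" "log phi (1 + phi powr -2) < 1"
    using phi_gt_1 by (simp_all add: phi_powr_minus_2 add_pos_nonneg)
qed

lemma F_asymptotics: "(\<lambda>n. sqrt 5 * real (F n) / phi ^ Suc n) \<longlonglongrightarrow> 1"
proof -
  have "(\<lambda>n. real (fib (Suc n)) / (phi ^ Suc n / sqrt 5)) \<longlonglongrightarrow> 1"
    using LIMSEQ_Suc[OF fib_asymptotics] unfolding phi_def .
  then show ?thesis
    by (simp add: F_eq_fib field_simps)
qed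

lemma log_phi_asymptotics:
  assumes "(\<lambda>n. x n / phi ^ (n + c)) \<longlonglongrightarrow> l" "0 < l" "\<And>n. 0 < x n"
  shows "(\<lambda>n. log phi (x n) - real (n + c)) \<longlonglongrightarrow> log phi l"
proof -
  have "log phi (x n) - real (n + c) = log phi (x n / phi ^ (n + c))" for n
    using assms(3)[of n] phi_gt_1 by (simp add: log_divide log_nat_power)
  moreover have "(\<lambda>n. log phi (x n / phi ^ (n + c))) \<longlonglongrightarrow> log phi l"
    using assms(1,2) phi_gt_1 by (intro tendsto_log tendsto_const) auto
  ultimately show ?thesis
    by simp
qed

lemma log_F_asymptotics: "(\<lambda>n. log phi (sqrt 5 * real (F n)) - real (Suc n)) \<longlonglongrightarrow> 0"
  using log_phi_asymptotics[of "\<lambda>n. sqrt 5 * real (F n)" 1 1] F_asymptotics F_pos by simp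

lemma log_F_add_asymptotics:
  "(\<lambda>n. log phi (sqrt 5 * (real (F (n + 2)) + real (F n))) - real (n + 3))
     \<longlonglongrightarrow> log phi (1 + phi powr -2)"
proof (rule log_phi_asymptotics)
  have "sqrt 5 * (real (F (n + 2)) + real (F n)) / phi ^ (n + 3)
      = sqrt 5 * real (F (n + 2)) / phi ^ Suc (n + 2) + sqrt 5 * real (F n) / phi ^ Suc n / phi\<^sup>2"
    for n
    using phi_gt_1 by (simp add: field_simps power2_eq_square eval_nat_numeral)
  moreover have "(\<lambda>n. sqrt 5 * real (F (n + 2)) / phi ^ Suc (n + 2)
      + sqrt 5 * real (F n) / phi ^ Suc n / phi\<^sup>2) \<longlonglongrightarrow> 1 + 1 / phi\<^sup>2"
    using phi_gt_1
    by (intro tendsto_intros LIMSEQ_ignore_initial_segment[OF F_asymptotics] F_asymptotics) auto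
  ultimately show "(\<lambda>n. sqrt 5 * (real (F (n + 2)) + real (F n)) / phi ^ (n + 3))
      \<longlonglongrightarrow> 1 + phi powr -2"
    by (simp add: phi_powr_minus_2)
qed (use F_pos phi_gt_1 in \<open>auto simp: phi_powr_minus_2 add_pos_nonneg\<close>)

lemma log_position_in_bracket:
  assumes "F (n + 2) \<le> m" "m < F (n + 3)"
  defines "x \<equiv> log phi (sqrt 5 * real m) - real (n + 3)"
  shows "log phi (sqrt 5 * real (F (n + 2))) - real (n + 3) \<le> x"
    and "x < log phi (sqrt 5 * real (F (n + 3))) - real (n + 3)"
    and "x < log phi (sqrt 5 * (real (F (n + 2)) + real (F n))) - real (n + 3) \<longleftrightarrow> m < F (n + 2) + F n"
proof -
  have log_less: "log phi (sqrt 5 * u) < log phi (sqrt 5 * v) \<longleftrightarrow> u < v" if "0 < u" "0 < v" for u v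
    using that phi_gt_1 by (subst log_less_cancel_iff) auto
  have pos: "0 < real (F k)" for k
    using F_pos[of k] by simp
  then have "0 < real m"
    using assms(1) by (metis of_nat_le_iff order_less_le_trans)
  show "log phi (sqrt 5 * real (F (n + 2))) - real (n + 3) \<le> x"
    using log_less[OF \<open>0 < real m\<close> pos, of "n + 2"] assms(1) unfolding x_def by linarith
  show "x < log phi (sqrt 5 * real (F (n + 3))) - real (n + 3)"
    using log_less[OF \<open>0 < real m\<close> pos, of "n + 3"] assms(2) unfolding x_def by linarith
  have "0 < real (F (n + 2)) + real (F n)"
    using pos by (simp add: add_pos_pos)
  from log_less[OF \<open>0 < real m\<close> this] show
    "x < log phi (sqrt 5 * (real (F (n + 2)) + real (F n))) - real (n + 3) \<longleftrightarrow> m < F (n + 2) + F n"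
    unfolding x_def by linarith
qed

lemma frac_shifted_window:
  fixes x e \<beta> :: real
  assumes "0 < e" "-e < x" "x < 1 + e" "0 < \<beta>" "\<beta> + 2 * e \<le> 1"
  shows "frac (x - e) < \<beta> - 2 * e \<Longrightarrow> x < \<beta> - e"
    and "x < \<beta> + e \<Longrightarrow> frac (x + e) < \<beta> + 2 * e"
proof -
  have "frac (x - e) = (if 0 \<le> x - e then x - e else x - e + 1)"
    using assms by (intro frac_eq_if) linarith+
  then show "frac (x - e) < \<beta> - 2 * e \<Longrightarrow> x < \<beta> - e"
    using assms by (cases "0 \<le> x - e") auto
  show "x < \<beta> + e \<Longrightarrow> frac (x + e) < \<beta> + 2 * e"
    using assms by (subst frac_eq_id) auto
qed

lemma LB3_100_approximation:
  fixes e :: real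
  defines "\<beta> \<equiv> log phi (1 + phi powr -2)"
  assumes "0 < e" "\<beta> + 2 * e \<le> 1"
  shows "\<forall>\<^sub>F m in sequentially.
    (frac (log phi (sqrt 5 * real m) - e) < \<beta> - 2 * e \<longrightarrow> LB 3 m = Some [True, False, False]) \<and>
    (LB 3 m = Some [True, False, False] \<longrightarrow> frac (log phi (sqrt 5 * real m) + e) < \<beta> + 2 * e)"
proof -
  txt \<open>By Binet's formula these tend to 0, 1 and \<open>\<beta>\<close>.\<close>
  define lo where "lo n = log phi (sqrt 5 * real (F (n + 2))) - real (n + 3)" for n
  define hi where "hi n = log phi (sqrt 5 * real (F (n + 3))) - real (n + 3)" for n
  define mid where "mid n = log phi (sqrt 5 * (real (F (n + 2)) + real (F n))) - real (n + 3)" for n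
  have "lo \<longlonglongrightarrow> 0"
    using LIMSEQ_ignore_initial_segment[OF log_F_asymptotics, of 2]
    unfolding lo_def[abs_def] by (simp add: add.commute)
  moreover have "(\<lambda>n. (log phi (sqrt 5 * real (F (n + 3))) - real (Suc (n + 3))) + 1) \<longlonglongrightarrow> 0 + 1"
    using LIMSEQ_ignore_initial_segment[OF log_F_asymptotics, of 3] by (intro tendsto_add tendsto_const)
  then have "hi \<longlonglongrightarrow> 1"
    unfolding hi_def[abs_def] by (simp add: algebra_simps)
  moreover have "mid \<longlonglongrightarrow> \<beta>"
    unfolding mid_def[abs_def] \<beta>_def by (rule log_F_add_asymptotics)
  ultimately have "\<forall>\<^sub>F n in sequentially. -e < lo n \<and> hi n < 1 + e \<and> \<beta> - e < mid n \<and> mid n < \<beta> + e"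
    using \<open>0 < e\<close> by (intro eventually_conj order_tendstoD) auto
  then obtain N where N: "\<And>n. N \<le> n \<Longrightarrow> -e < lo n \<and> hi n < 1 + e \<and> \<beta> - e < mid n \<and> mid n < \<beta> + e"
    unfolding eventually_sequentially by blast
  have \<beta>: "0 < \<beta>"
    using log_phi_golden_mantissa_bounds by (simp add: \<beta>_def)
  have "(frac (log phi (sqrt 5 * real m) - e) < \<beta> - 2 * e \<longrightarrow> LB 3 m = Some [True, False, False]) \<and>
    (LB 3 m = Some [True, False, False] \<longrightarrow> frac (log phi (sqrt 5 * real m) + e) < \<beta> + 2 * e)"
    if m: "max 3 (F (N + 3)) \<le> m" for m
  proof -
    obtain n where n: "F (n + 2) \<le> m" "m < F (n + 3)" "LB 3 m = Some [True, False, F (n + 2) + F n \<le> m]"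
      using LB3_cases m by auto
    have "N \<le> n"
    proof (rule ccontr)
      assume "\<not> N \<le> n"
      then have "F (n + 3) \<le> F (N + 3)"
        by (intro F_mono) simp
      then show False
        using n(2) m by simp
    qed
    define x where "x = log phi (sqrt 5 * real m) - real (n + 3)"
    note position = log_position_in_bracket[OF n(1,2), folded x_def lo_def hi_def mid_def]
    have LB: "LB 3 m = Some [True, False, False] \<longleftrightarrow> x < mid n"
      using n(3) position(3) by auto
    have shift: "frac (log phi (sqrt 5 * real m) + t) = frac (x + t)" for t
      using frac_add_int_right[of "real (n + 3)" "x + t"] by (simp add: x_def algebra_simps)
    have "-e < x" "x < 1 + e" "\<beta> - e < mid n" "mid n < \<beta> + e"
      using N[OF \<open>N \<le> n\<close>] position(1,2) by auto
    then have "frac (x - e) < \<beta> - 2 * e \<Longrightarrow> x < mid n" "x < mid n \<Longrightarrow> frac (x + e) < \<beta> + 2 * e"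
      using frac_shifted_window[OF assms(2) _ _ \<beta> assms(3), of x] by auto
    then show ?thesis
      using LB shift[of "-e"] shift[of e] by auto
  qed
  then show ?thesis
    unfolding eventually_sequentially by blast
qed

section \<open>Leading blocks of powers\<close>

lemma has_density_eventually_cong:
  assumes "has_density P \<delta>" "\<forall>\<^sub>F k in sequentially. P k \<longleftrightarrow> Q k"
  shows "has_density Q \<delta>"
proof (rule has_density_squeeze)
  show "\<exists>Q' R \<delta>\<^sub>1 \<delta>\<^sub>2. has_density Q' \<delta>\<^sub>1 \<and> has_density R \<delta>\<^sub>2 \<and> \<delta> - \<epsilon> \<le> \<delta>\<^sub>1 \<and> \<delta>\<^sub>2 \<le> \<delta> + \<epsilon> \<and>
      (\<forall>\<^sub>F k in sequentially. (Q' k \<longrightarrow> Q k) \<and> (Q k \<longrightarrow> R k))" if "0 < \<epsilon>" for \<epsilon>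
    using assms that by (intro exI[of _ P] exI[of _ \<delta>] conjI) (auto elim: eventually_mono)
qed

lemma filterlim_power_nat_at_top:
  fixes a :: nat
  assumes "1 < a"
  shows "filterlim (\<lambda>k. a ^ k) at_top sequentially"
  unfolding filterlim_at_top
proof
  fix M :: nat
  have M_le: "M \<le> a ^ k" if "M \<le> k" for k
    using that less_exp[of k] power_mono[of 2 a k] assms by linarith
  show "\<forall>\<^sub>F k in sequentially. M \<le> a ^ k"
    using eventually_ge_at_top[of M] by (rule eventually_mono) (rule M_le)
qed

lemma has_density_LB3_100:
  assumes "1 < a"
  shows "has_density (\<lambda>k. LB 3 (a ^ k) = Some [True, False, False]) (log phi (1 + phi powr -2))"
proof (rule has_density_squeeze)
  fix \<epsilon> :: real assume "0 < \<epsilon>"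
  define \<beta> where "\<beta> = log phi (1 + phi powr -2)"
  define \<theta> where "\<theta> = log phi (real a)"
  define s where "s = log phi (sqrt 5)"
  define e where "e = min (\<epsilon> / 2) (min (\<beta> / 2) ((1 - \<beta>) / 2))"
  have \<beta>: "0 < \<beta>" "\<beta> < 1"
    using log_phi_golden_mantissa_bounds by (simp_all add: \<beta>_def)
  then have "0 < e" "e \<le> \<epsilon> / 2" "e \<le> \<beta> / 2" "e \<le> (1 - \<beta>) / 2"
    using \<open>0 < \<epsilon>\<close> by (auto simp: e_def min_def)
  then have e: "0 < e" "2 * e \<le> \<epsilon>" "2 * e \<le> \<beta>" "\<beta> + 2 * e \<le> 1"
    by auto
  have log_power: "log phi (sqrt 5 * real (a ^ k)) = real k * \<theta> - t + (s + t)" for k t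
    using assms by (simp add: \<theta>_def s_def log_mult log_nat_power)
  have approx: "\<forall>\<^sub>F k in sequentially.
    (frac (real k * \<theta> - (e - s)) < \<beta> - 2 * e \<longrightarrow> LB 3 (a ^ k) = Some [True, False, False]) \<and>
    (LB 3 (a ^ k) = Some [True, False, False] \<longrightarrow> frac (real k * \<theta> - (- e - s)) < \<beta> + 2 * e)"
    using eventually_compose_filterlim[OF LB3_100_approximation[OF e(1)] filterlim_power_nat_at_top[OF assms]]
      e(4) log_power by (simp add: \<beta>_def algebra_simps)
  have "has_density (\<lambda>k. frac (real k * \<theta> - w) < L) L" if "0 \<le> L" "L \<le> 1" for w L
    using frac_mult_has_density log_phi_irrational[OF assms] that by (simp add: \<theta>_def)
  then have "has_density (\<lambda>k. frac (real k * \<theta> - (e - s)) < \<beta> - 2 * e) (\<beta> - 2 * e)"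
    "has_density (\<lambda>k. frac (real k * \<theta> - (- e - s)) < \<beta> + 2 * e) (\<beta> + 2 * e)"
    using e by simp_all
  moreover have "\<beta> - \<epsilon> \<le> \<beta> - 2 * e" "\<beta> + 2 * e \<le> \<beta> + \<epsilon>"
    using e by simp_all
  ultimately show "\<exists>Q R \<delta>\<^sub>1 \<delta>\<^sub>2. has_density Q \<delta>\<^sub>1 \<and> has_density R \<delta>\<^sub>2 \<and>
      log phi (1 + phi powr -2) - \<epsilon> \<le> \<delta>\<^sub>1 \<and> \<delta>\<^sub>2 \<le> log phi (1 + phi powr -2) + \<epsilon> \<and>
      (\<forall>\<^sub>F k in sequentially. (Q k \<longrightarrow> LB 3 (a ^ k) = Some [True, False, False]) \<and>
        (LB 3 (a ^ k) = Some [True, False, False] \<longrightarrow> R k))"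
    using approx unfolding \<beta>_def[symmetric] by blast
qed

lemma has_density_LB3_101:
  assumes "1 < a"
  shows "has_density (\<lambda>k. LB 3 (a ^ k) = Some [True, False, True]) (1 - log phi (1 + phi powr -2))"
proof (rule has_density_eventually_cong)
  show "has_density (\<lambda>k. LB 3 (a ^ k) \<noteq> Some [True, False, False]) (1 - log phi (1 + phi powr -2))"
    using has_density_Not[OF has_density_LB3_100[OF assms]] .
  have large: "3 \<le> a ^ k" if "2 \<le> k" for k
    using power_increasing[OF that, of a] mult_le_mono[of 2 a 2 a] assms by (simp add: power2_eq_square)
  show "\<forall>\<^sub>F k in sequentially.
      LB 3 (a ^ k) \<noteq> Some [True, False, False] \<longleftrightarrow> LB 3 (a ^ k) = Some [True, False, True]"
    using eventually_ge_at_top[of "2::nat"]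
  proof (rule eventually_mono)
    fix k :: nat assume "2 \<le> k"
    then obtain n where "LB 3 (a ^ k) = Some [True, False, F (n + 2) + F n \<le> a ^ k]"
      using LB3_cases[OF large] by blast
    then show "LB 3 (a ^ k) \<noteq> Some [True, False, False] \<longleftrightarrow> LB 3 (a ^ k) = Some [True, False, True]"
      by simp
  qed
qed

theorem theorem1p3:
  fixes a :: nat
  assumes "a > 1"
  shows "((\<lambda>n. real (card {k \<in> {1..n}. LB 3 (a ^ k) = Some [True, False, False]}) / real n)
           \<longlonglongrightarrow> log phi (1 + phi powr (-2))) \<and>
         ((\<lambda>n. real (card {k \<in> {1..n}. LB 3 (a ^ k) = Some [True, False, True]}) / real n)
           \<longlonglongrightarrow> log phi (phi / (1 + phi powr (-2))))"
proof -
  have "log phi (phi / (1 + phi powr -2)) = 1 - log phi (1 + phi powr -2)"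
    using phi_gt_1 add_pos_nonneg[of 1 "phi powr -2"] by (simp add: log_divide)
  then show ?thesis
    using has_density_LB3_100[OF assms] has_density_LB3_101[OF assms]
    by (simp add: has_density_def count_upto_def)
qed

end
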